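(* Let $(\mathcal{T},q)$ be an interaction-free OMQ with $\mathcal{T}$ a DL-Lite$_\mathcal{R}$ TBox and $q$ a Boolean CQ, let $\mathcal{A}$ be an ABox consistent with $\mathcal{T}$, and let $x$ be a shared variable of $q$ (a variable occurring in at least two distinct atoms of $q$). Then for every homomorphism $h:q\to\mathcal{C}_{\mathcal{A},\mathcal{T}}$ we have $h(x)\in\mathrm{const}(\mathcal{A})$.
   Context: DL-Lite$_\mathcal{R}$ TBoxes contain inclusions $B\sqsubseteq C$, $R\sqsubseteq S$ with $B::=A\mid\exists R$, $C::=B\mid\neg B$, $R$ a role ($r$ or $r^-$), $S::=R\mid\neg R$. An ABox $\mathcal{A}$ is a finite set of assertions $A(c)$, $r(b,c)$; $\mathrm{const}(\mathcal{A})$ is its set of individuals. For a consistent KB $(\mathcal{A},\mathcal{T})$, the canonical model $\mathcal{C}_{\mathcal{A},\mathcal{T}}$ has domain all words $aR_1\cdots R_n$ ($n\ge0$, $a\in\mathrm{const}(\mathcal{A})$, $R_i$ roles) such that if $n\ge1$ then $(\mathcal{A},\mathcal{T})\models\exists R_1(a)$ and there is no $b\in\mathrm{const}(\mathcal{A})$ with $(\mathcal{A},\mathcal{T})\models R_1(a,b)$, and for $1\le i<n$, $\mathcal{T}\models\exists R_i^-\sqsubseteq\exists R_{i+1}$ and $R_i^-\neq R_{i+1}$; it interprets $a$ as $a$, $A$ as the individuals $a$ with $(\mathcal{A},\mathcal{T})\models A(a)$ plus words $aR_1\cdots R_n$ ($n\ge1$) with $\mathcal{T}\models\exists R_n^-\sqsubseteq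 A$, and $r$ as the pairs $(a,b)$ with $r(a,b)\in\mathcal{A}$, plus $(w,wR')$ with $\mathcal{T}\models R'\sqsubseteq r$, plus $(wR',w)$ with $\mathcal{T}\models R'\sqsubseteq r^-$. Elements outside $\mathrm{const}(\mathcal{A})$ are anonymous. Let $\circledast$ be a special symbol and $C^\circledast=C\cup\{\circledast\}$. For an atom $\alpha$ and $\mu:\mathrm{vars}(\alpha)\to\mathrm{const}(\mathcal{A})^\circledast$, write $(\mathcal{A},\mathcal{T})\models_\mu\alpha$ if there is a homomorphism $h:\alpha\to\mathcal{C}_{\mathcal{A},\mathcal{T}}$ with $h(x)=\mu(x)$ when $\mu(x)\in\mathrm{const}(\mathcal{A})$ and $h(x)$ anonymous when $\mu(x)=\circledast$. $(\mathcal{T},q)$ is interaction-free if for every assertion $f$, all atoms $\alpha,\beta$ of $q$ and all $\mu_\alpha:\mathrm{vars}(\alpha)\to\mathrm{const}(f)^\circledast$, $\mu_\beta:\mathrm{vars}(\beta)\to\mathrm{const}(f)^\circledast$, if $(\{f\},\mathcal{T})\models_{\mu_\alpha}\alpha$ and $(\{f\},\mathcal{T})\models_{\mu_\beta}\beta$ then $(\alpha,\mu_\alpha)=(\beta,\mu_\beta)$. Homomorphisms from $q$ map constants to themselves. *)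

theory Defs
  imports Main
begin

datatype 'r role = P 'r | Inv 'r

fun inv :: "'r role \<Rightarrow> 'r role" where
  "inv (P r) = Inv r"
| "inv (Inv r) = P r"

datatype ('a, 'r) basic = Atomic 'a | Ex "'r role"

datatype ('a, 'r) concept = Pos "('a, 'r) basic" | Neg "('a, 'r) basic"

datatype 'r grole = RPos "'r role" | RNeg "'r role"

datatype ('a, 'r) axiom = CI "('a, 'r) basic" "('a, 'r) concept" | RI "'r role" "'r grole"

datatype ('a, 'r, 'c) assertion = CA 'a 'c | RA 'r 'c 'c

fun consts_of :: "('a, 'r, 'c) assertion \<Rightarrow> 'c set" where
  "consts_of (CA A c) = {c}"
| "consts_of (RA r b c) = {b, c}"

definition const :: "('a, 'r, 'c) assertion set \<Rightarrow> 'c set" where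
  "const Ab = (\<Union>f\<in>Ab. consts_of f)"

record ('a, 'r, 'c, 'd) interp =
  idom :: "'d set"
  conc :: "'a \<Rightarrow> 'd set"
  rol  :: "'r \<Rightarrow> ('d \<times> 'd) set"
  ind  :: "'c \<Rightarrow> 'd"

definition wf_interp :: "('a, 'r, 'c, 'd) interp \<Rightarrow> bool" where
  "wf_interp I \<longleftrightarrow> idom I \<noteq> {} \<and> (\<forall>A. conc I A \<subseteq> idom I)
     \<and> (\<forall>r. rol I r \<subseteq> idom I \<times> idom I) \<and> (\<forall>c. ind I c \<in> idom I)
     \<and> inj (ind I)"  (* unique name assumption *)

fun role_ext :: "('a, 'r, 'c, 'd) interp \<Rightarrow> 'r role \<Rightarrow> ('d \<times> 'd) set" where
  "role_ext I (P r) = rol I r"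
| "role_ext I (Inv r) = converse (rol I r)"

fun basic_ext :: "('a, 'r, 'c, 'd) interp \<Rightarrow> ('a, 'r) basic \<Rightarrow> 'd set" where
  "basic_ext I (Atomic A) = conc I A"
| "basic_ext I (Ex R) = Domain (role_ext I R)"

fun sat_ax :: "('a, 'r, 'c, 'd) interp \<Rightarrow> ('a, 'r) axiom \<Rightarrow> bool" where
  "sat_ax I (CI B (Pos B')) \<longleftrightarrow> basic_ext I B \<subseteq> basic_ext I B'"
| "sat_ax I (CI B (Neg B')) \<longleftrightarrow> basic_ext I B \<inter> basic_ext I B' = {}"
| "sat_ax I (RI R (RPos S)) \<longleftrightarrow> role_ext I R \<subseteq> role_ext I S"
| "sat_ax I (RI R (RNeg S)) \<longleftrightarrow> role_ext I R \<inter> role_ext I S = {}"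

fun sat_as :: "('a, 'r, 'c, 'd) interp \<Rightarrow> ('a, 'r, 'c) assertion \<Rightarrow> bool" where
  "sat_as I (CA A c) \<longleftrightarrow> ind I c \<in> conc I A"
| "sat_as I (RA r b c) \<longleftrightarrow> (ind I b, ind I c) \<in> rol I r"

definition is_model :: "('a, 'r, 'c, 'd) interp \<Rightarrow> ('a, 'r) axiom set
    \<Rightarrow> ('a, 'r, 'c) assertion set \<Rightarrow> bool" where
  "is_model I T Ab \<longleftrightarrow> wf_interp I \<and> (\<forall>ax\<in>T. sat_ax I ax) \<and> (\<forall>f\<in>Ab. sat_as I f)"

text \<open>Domain type used for (first-order) entailment: words over individuals and roles,
  i.e. the type in which canonical models live.\<close>
type_synonym ('r, 'c) elem = "'c \<times> 'r role list"

definition consistent :: "('a, 'r, 'c) assertion set \<Rightarrow> ('a, 'r) axiom set \<Rightarrow> bool" where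
  "consistent Ab T \<longleftrightarrow> (\<exists>I :: ('a, 'r, 'c, ('r, 'c) elem) interp. is_model I T Ab)"

definition tbox_entails :: "('a, 'r) axiom set \<Rightarrow> ('a, 'r) axiom \<Rightarrow> bool" where
  "tbox_entails T ax \<longleftrightarrow>
     (\<forall>I :: ('a, 'r, unit, ('r, unit) elem) interp. wf_interp I \<and> (\<forall>t\<in>T. sat_ax I t) \<longrightarrow> sat_ax I ax)"

definition kb_entails_basic :: "('a, 'r, 'c) assertion set \<Rightarrow> ('a, 'r) axiom set
    \<Rightarrow> ('a, 'r) basic \<Rightarrow> 'c \<Rightarrow> bool" where
  "kb_entails_basic Ab T B a \<longleftrightarrow>
     (\<forall>I :: ('a, 'r, 'c, ('r, 'c) elem) interp. is_model I T Ab \<longrightarrow> ind I a \<in> basic_ext I B)"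

definition kb_entails_role :: "('a, 'r, 'c) assertion set \<Rightarrow> ('a, 'r) axiom set
    \<Rightarrow> 'r role \<Rightarrow> 'c \<Rightarrow> 'c \<Rightarrow> bool" where
  "kb_entails_role Ab T R a b \<longleftrightarrow>
     (\<forall>I :: ('a, 'r, 'c, ('r, 'c) elem) interp. is_model I T Ab \<longrightarrow> (ind I a, ind I b) \<in> role_ext I R)"

definition canon_dom :: "('a, 'r, 'c) assertion set \<Rightarrow> ('a, 'r) axiom set \<Rightarrow> ('r, 'c) elem set" where
  "canon_dom Ab T = {(a, ws) | a ws. a \<in> const Ab
     \<and> (ws \<noteq> [] \<longrightarrow> kb_entails_basic Ab T (Ex (hd ws)) a
                     \<and> \<not> (\<exists>b\<in>const Ab. kb_entails_role Ab T (hd ws) a b))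
     \<and> (\<forall>i. Suc i < length ws \<longrightarrow>
            tbox_entails T (CI (Ex (inv (ws ! i))) (Pos (Ex (ws ! Suc i))))
            \<and> inv (ws ! i) \<noteq> ws ! Suc i)}"

definition canon :: "('a, 'r, 'c) assertion set \<Rightarrow> ('a, 'r) axiom set
    \<Rightarrow> ('a, 'r, 'c, ('r, 'c) elem) interp" where
  "canon Ab T = \<lparr> idom = canon_dom Ab T,
     conc = (\<lambda>A. {(a, []) | a. a \<in> const Ab \<and> kb_entails_basic Ab T (Atomic A) a}
               \<union> {(a, ws) | a ws. (a, ws) \<in> canon_dom Ab T \<and> ws \<noteq> []
                     \<and> tbox_entails T (CI (Ex (inv (last ws))) (Pos (Atomic A)))}),
     rol = (\<lambda>r. {((a, []), (b, [])) | a b. RA r a b \<in> Ab}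
               \<union> {((a, ws), (a, ws @ [R])) | a ws R. (a, ws @ [R]) \<in> canon_dom Ab T
                     \<and> tbox_entails T (RI R (RPos (P r)))}
               \<union> {((a, ws @ [R]), (a, ws)) | a ws R. (a, ws @ [R]) \<in> canon_dom Ab T
                     \<and> tbox_entails T (RI R (RPos (Inv r)))}),
     ind = (\<lambda>c. (c, [])) \<rparr>"

definition anonymous :: "('a, 'r, 'c) assertion set \<Rightarrow> ('a, 'r) axiom set \<Rightarrow> ('r, 'c) elem \<Rightarrow> bool" where
  "anonymous Ab T w \<longleftrightarrow> w \<in> canon_dom Ab T \<and> w \<notin> (\<lambda>a. (a, [])) ` const Ab"

datatype ('v, 'c) qterm = Var 'v | Cst 'c

datatype ('a, 'r, 'v, 'c) atom = CAt 'a "('v, 'c) qterm" | RAt 'r "('v, 'c) qterm" "('v, 'c) qterm"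

fun tvars :: "('v, 'c) qterm \<Rightarrow> 'v set" where
  "tvars (Var v) = {v}"
| "tvars (Cst c) = {}"

fun avars :: "('a, 'r, 'v, 'c) atom \<Rightarrow> 'v set" where
  "avars (CAt A t) = tvars t"
| "avars (RAt r t u) = tvars t \<union> tvars u"

fun teval :: "('a, 'r, 'c, 'd) interp \<Rightarrow> ('v \<Rightarrow> 'd) \<Rightarrow> ('v, 'c) qterm \<Rightarrow> 'd" where
  "teval I h (Var v) = h v"
| "teval I h (Cst c) = ind I c"

fun atom_hom :: "('a, 'r, 'c, 'd) interp \<Rightarrow> ('v \<Rightarrow> 'd) \<Rightarrow> ('a, 'r, 'v, 'c) atom \<Rightarrow> bool" where
  "atom_hom I h (CAt A t) \<longleftrightarrow> teval I h t \<in> conc I A"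
| "atom_hom I h (RAt r t u) \<longleftrightarrow> (teval I h t, teval I h u) \<in> rol I r"

definition is_hom :: "('a, 'r, 'v, 'c) atom set \<Rightarrow> ('a, 'r, 'c, 'd) interp \<Rightarrow> ('v \<Rightarrow> 'd) \<Rightarrow> bool" where
  "is_hom q I h \<longleftrightarrow> (\<forall>\<alpha>\<in>q. atom_hom I h \<alpha>)"

text \<open>mu : vars(alpha) \<rightharpoonup> const(f) \<union> {\<circledast>}, with None standing for \<circledast>.\<close>
definition models_mu :: "('a, 'r, 'c) assertion set \<Rightarrow> ('a, 'r) axiom set
    \<Rightarrow> ('v \<rightharpoonup> 'c option) \<Rightarrow> ('a, 'r, 'v, 'c) atom \<Rightarrow> bool" where
  "models_mu Ab T mu \<alpha> \<longleftrightarrow> (\<exists>h. is_hom {\<alpha>} (canon Ab T) h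
     \<and> (\<forall>v\<in>avars \<alpha>. \<forall>c. mu v = Some (Some c) \<longrightarrow> h v = (c, []))
     \<and> (\<forall>v\<in>avars \<alpha>. mu v = Some None \<longrightarrow> anonymous Ab T (h v)))"

definition admissible_mu :: "('a, 'r, 'c) assertion \<Rightarrow> ('a, 'r, 'v, 'c) atom \<Rightarrow> ('v \<rightharpoonup> 'c option) \<Rightarrow> bool" where
  "admissible_mu f \<alpha> mu \<longleftrightarrow> dom mu = avars \<alpha> \<and> ran mu \<subseteq> Some ` consts_of f \<union> {None}"

definition interaction_free :: "('a, 'r) axiom set \<Rightarrow> ('a, 'r, 'v, 'c) atom set \<Rightarrow> bool" where
  "interaction_free T q \<longleftrightarrow>
     (\<forall>f \<alpha> \<beta> mu\<^sub>\<alpha> mu\<^sub>\<beta>. \<alpha> \<in> q \<and> \<beta> \<in> q \<and> admissible_mu f \<alpha> mu\<^sub>\<alpha> \<and> admissible_mu f \<beta> mu\<^sub>\<beta>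
        \<and> models_mu {f} T mu\<^sub>\<alpha> \<alpha> \<and> models_mu {f} T mu\<^sub>\<beta> \<beta>
        \<longrightarrow> (\<alpha>, mu\<^sub>\<alpha>) = (\<beta>, mu\<^sub>\<beta>))"

definition shared_var :: "('a, 'r, 'v, 'c) atom set \<Rightarrow> 'v \<Rightarrow> bool" where
  "shared_var q x \<longleftrightarrow> (\<exists>\<alpha>\<in>q. \<exists>\<beta>\<in>q. \<alpha> \<noteq> \<beta> \<and> x \<in> avars \<alpha> \<and> x \<in> avars \<beta>)"

end

theory Submission
  imports Defs
begin

text \<open>
  Suppose \<open>h x\<close> is anonymous. It then lies in the tree of the canonical model grown from an
  individual \<open>a\<close> through a role \<open>R\<close>, and \<open>(\<A>, \<T>) \<Turnstile> \<exists>R(a)\<close>. In DL-Lite this entailment is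
  already caused by a single assertion \<open>f\<close> mentioning \<open>a\<close>: otherwise models of the single
  assertions refuting \<open>\<exists>R(a)\<close> can be glued along their individuals, which preserves the positive
  inclusions, and multiplied with a model of \<open>(\<A>, \<T>)\<close>, which restores the negative ones, giving a
  model of \<open>(\<A>, \<T>)\<close> refuting \<open>\<exists>R(a)\<close>. Hence the whole tree below \<open>a\<close> through \<open>R\<close> also exists in the
  canonical model of \<open>({f}, \<T>)\<close>, and both atoms sharing \<open>x\<close> are matched there with the pattern of
  constants and anonymous elements read off \<open>h\<close>. Interaction-freeness then forces the two atoms
  to coincide.
\<close>

fun positive_axiom :: "('a, 'r) axiom \<Rightarrow> bool" where
  "positive_axiom (CI B (Pos B')) = True"
| "positive_axiom (CI B (Neg B')) = False"
| "positive_axiom (RI R (RPos S)) = True"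
| "positive_axiom (RI R (RNeg S)) = False"

definition interp_prod :: "('a, 'r, 'c, 'd) interp \<Rightarrow> ('a, 'r, 'c, 'e) interp
    \<Rightarrow> ('a, 'r, 'c, 'd \<times> 'e) interp" where
  "interp_prod I J = \<lparr>idom = idom I \<times> idom J, conc = (\<lambda>A. conc I A \<times> conc J A),
     rol = (\<lambda>r. {((x, y), (x', y')) | x y x' y'. (x, x') \<in> rol I r \<and> (y, y') \<in> rol J r}),
     ind = (\<lambda>c. (ind I c, ind J c))\<rparr>"

lemma role_ext_interp_prod:
  "role_ext (interp_prod I J) R =
     {((x, y), (x', y')) | x y x' y'. (x, x') \<in> role_ext I R \<and> (y, y') \<in> role_ext J R}"
  by (cases R) (auto simp: interp_prod_def)

lemma basic_ext_interp_prod: "basic_ext (interp_prod I J) B = basic_ext I B \<times> basic_ext J B"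
  by (cases B) (simp add: interp_prod_def, simp add: role_ext_interp_prod, blast)

lemma sat_ax_interp_prod:
  assumes "sat_ax I ax" and "positive_axiom ax \<Longrightarrow> sat_ax J ax"
  shows "sat_ax (interp_prod I J) ax"
proof (cases ax)
  case (CI B C)
  with assms show ?thesis by (cases C) (auto simp: basic_ext_interp_prod)
next
  case (RI R S)
  with assms show ?thesis by (cases S) (auto simp: role_ext_interp_prod)
qed

lemma sat_as_interp_prod: "sat_as I f \<Longrightarrow> sat_as J f \<Longrightarrow> sat_as (interp_prod I J) f"
  by (cases f) (auto simp: interp_prod_def)

lemma wf_interp_interp_prod: "wf_interp I \<Longrightarrow> wf_interp J \<Longrightarrow> wf_interp (interp_prod I J)"
  unfolding wf_interp_def interp_prod_def inj_def by auto

definition interp_image :: "('d \<Rightarrow> 'e) \<Rightarrow> ('a, 'r, 'c, 'd) interp \<Rightarrow> ('a, 'r, 'c, 'e) interp" where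
  "interp_image \<phi> I = \<lparr>idom = \<phi> ` idom I, conc = (\<lambda>A. \<phi> ` conc I A),
     rol = (\<lambda>r. map_prod \<phi> \<phi> ` rol I r), ind = \<phi> \<circ> ind I\<rparr>"

lemma role_ext_interp_image: "role_ext (interp_image \<phi> I) R = map_prod \<phi> \<phi> ` role_ext I R"
  by (cases R) (auto simp: interp_image_def)

lemma basic_ext_interp_image: "basic_ext (interp_image \<phi> I) B = \<phi> ` basic_ext I B"
  by (cases B) (simp add: interp_image_def, simp add: role_ext_interp_image, force)

lemma sat_ax_interp_image:
  assumes "inj \<phi>" and "sat_ax I ax"
  shows "sat_ax (interp_image \<phi> I) ax"
proof -
  have "inj (map_prod \<phi> \<phi>)"
    using assms(1) unfolding inj_def by auto
  with assms show ?thesis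
    by (cases ax rule: positive_axiom.cases)
      (auto simp: basic_ext_interp_image role_ext_interp_image inj_image_subset_iff
        image_Int[symmetric])
qed

lemma sat_as_interp_image: "sat_as I f \<Longrightarrow> sat_as (interp_image \<phi> I) f"
  by (cases f) (auto simp: interp_image_def)

lemma wf_interp_interp_image: "inj \<phi> \<Longrightarrow> wf_interp I \<Longrightarrow> wf_interp (interp_image \<phi> I)"
  unfolding wf_interp_def interp_image_def by (auto intro: inj_compose) blast+

text \<open>Elements naming an individual of \<open>f\<close> go to that individual; all others are pushed off the
  individuals. Elements coming from different assertions may be identified, which only positive
  axioms survive.\<close>
definition glue_map :: "('a, 'r, 'c, ('r, 'c) elem) interp \<Rightarrow> ('a, 'r, 'c) assertion
    \<Rightarrow> ('r, 'c) elem \<Rightarrow> ('r, 'c) elem" where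
  "glue_map I f d = (if \<exists>c\<in>consts_of f. d = ind I c then (THE c. c \<in> consts_of f \<and> d = ind I c, [])
     else (fst d, Inv undefined # snd d))"

lemma glue_map_ind:
  assumes "inj (ind I)" and "c \<in> consts_of f"
  shows "glue_map I f (ind I c) = (c, [])"
proof -
  have "(THE c'. c' \<in> consts_of f \<and> ind I c = ind I c') = c"
    using assms by (auto dest: injD)
  with assms(2) show ?thesis
    by (auto simp: glue_map_def)
qed

lemma glue_map_eq_individual:
  assumes "inj (ind I)" and "glue_map I f d = (c, [])"
  shows "c \<in> consts_of f \<and> d = ind I c"
proof (cases "\<exists>c'\<in>consts_of f. d = ind I c'")
  case True
  then obtain c' where "c' \<in> consts_of f" and "d = ind I c'"
    by blast
  with assms show ?thesis
    using glue_map_ind[OF assms(1), of c' f] by simp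
next
  case False
  with assms(2) show ?thesis
    by (simp add: glue_map_def)
qed

definition interp_glue :: "('a, 'r, 'c) assertion set
    \<Rightarrow> (('a, 'r, 'c) assertion \<Rightarrow> ('a, 'r, 'c, ('r, 'c) elem) interp)
    \<Rightarrow> ('a, 'r, 'c, ('r, 'c) elem) interp" where
  "interp_glue Ab Is = \<lparr>idom = range (\<lambda>c. (c, [])) \<union> (\<Union>f\<in>Ab. glue_map (Is f) f ` idom (Is f)),
     conc = (\<lambda>A. \<Union>f\<in>Ab. glue_map (Is f) f ` conc (Is f) A),
     rol = (\<lambda>r. \<Union>f\<in>Ab. map_prod (glue_map (Is f) f) (glue_map (Is f) f) ` rol (Is f) r),
     ind = (\<lambda>c. (c, []))\<rparr>"

lemma role_ext_interp_glue:
  "role_ext (interp_glue Ab Is) R =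
     (\<Union>f\<in>Ab. map_prod (glue_map (Is f) f) (glue_map (Is f) f) ` role_ext (Is f) R)"
  by (cases R) (auto simp: interp_glue_def image_iff, force+)

lemma basic_ext_interp_glue:
  "basic_ext (interp_glue Ab Is) B = (\<Union>f\<in>Ab. glue_map (Is f) f ` basic_ext (Is f) B)"
  by (cases B) (simp add: interp_glue_def, simp add: role_ext_interp_glue, force)

lemma sat_ax_interp_glue:
  assumes "\<And>f. f \<in> Ab \<Longrightarrow> sat_ax (Is f) ax" and "positive_axiom ax"
  shows "sat_ax (interp_glue Ab Is) ax"
  using assms
  by (cases ax rule: positive_axiom.cases)
    (simp_all add: basic_ext_interp_glue role_ext_interp_glue, blast+)

lemma sat_as_interp_glue:
  "f \<in> Ab \<Longrightarrow> wf_interp (Is f) \<Longrightarrow> sat_as (Is f) f \<Longrightarrow> sat_as (interp_glue Ab Is) f"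
  by (cases f) (auto simp: interp_glue_def wf_interp_def glue_map_ind intro!: bexI[of _ f] image_eqI)

lemma wf_interp_interp_glue: "(\<And>f. f \<in> Ab \<Longrightarrow> wf_interp (Is f)) \<Longrightarrow> wf_interp (interp_glue Ab Is)"
  unfolding wf_interp_def interp_glue_def inj_def by auto blast+

lemma ex_inj_elem_prod: "\<exists>\<phi> :: ('r, 'c) elem \<times> ('r, 'c) elem \<Rightarrow> ('r, 'c) elem. inj \<phi>"
proof -
  have "infinite (UNIV :: 'r role list set)"
    by (rule infinite_UNIV_listI)
  then have "infinite (UNIV :: ('r, 'c) elem set)"
    by (simp add: finite_prod)
  note le = card_of_Times_same_infinite[OF this, unfolded ordIso_iff_ordLeq, THEN conjunct1]
  obtain \<phi> :: "('r, 'c) elem \<times> ('r, 'c) elem \<Rightarrow> ('r, 'c) elem" where "inj_on \<phi> (UNIV \<times> UNIV)"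
    using card_of_ordLeq[THEN iffD2, OF le] by blast
  then show ?thesis
    by auto
qed

lemma models_of_assertions_combine:
  fixes J :: "('a, 'r, 'c, ('r, 'c) elem) interp"
    and Is :: "('a, 'r, 'c) assertion \<Rightarrow> ('a, 'r, 'c, ('r, 'c) elem) interp"
  assumes J: "is_model J T Ab" and Is: "\<And>f. f \<in> Ab \<Longrightarrow> is_model (Is f) T {f}"
  obtains M :: "('a, 'r, 'c, ('r, 'c) elem) interp"
  where "is_model M T Ab"
    and "\<And>a B. ind M a \<in> basic_ext M B \<Longrightarrow> \<exists>f\<in>Ab. a \<in> consts_of f \<and> ind (Is f) a \<in> basic_ext (Is f) B"
proof -
  \<comment> \<open>Entailment only quantifies over interpretations on \<open>elem\<close>, so the product is moved back there.\<close>
  obtain \<phi> :: "('r, 'c) elem \<times> ('r, 'c) elem \<Rightarrow> ('r, 'c) elem" where \<phi>: "inj \<phi>"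
    using ex_inj_elem_prod by blast
  define M where "M = interp_image \<phi> (interp_prod J (interp_glue Ab Is))"
  have wf: "\<And>f. f \<in> Ab \<Longrightarrow> wf_interp (Is f)"
    using Is by (simp add: is_model_def)
  have "is_model M T Ab"
    unfolding is_model_def M_def
  proof (intro conjI ballI)
    show "wf_interp (interp_image \<phi> (interp_prod J (interp_glue Ab Is)))"
      using J wf \<phi>
      by (intro wf_interp_interp_image wf_interp_interp_prod wf_interp_interp_glue)
        (auto simp: is_model_def)
  next
    fix ax assume "ax \<in> T"
    then show "sat_ax (interp_image \<phi> (interp_prod J (interp_glue Ab Is))) ax"
      using J Is \<phi>
      by (intro sat_ax_interp_image sat_ax_interp_prod sat_ax_interp_glue) (auto simp: is_model_def)
  next
    fix f assume "f \<in> Ab"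
    then show "sat_as (interp_image \<phi> (interp_prod J (interp_glue Ab Is))) f"
      using J Is wf
      by (intro sat_as_interp_image sat_as_interp_prod sat_as_interp_glue) (auto simp: is_model_def)
  qed
  moreover have "\<exists>f\<in>Ab. a \<in> consts_of f \<and> ind (Is f) a \<in> basic_ext (Is f) B"
    if "ind M a \<in> basic_ext M B" for a B
  proof -
    have "ind M a = \<phi> (ind J a, (a, []))"
      by (simp add: M_def interp_image_def interp_prod_def interp_glue_def)
    with that \<phi> have "(a, []) \<in> basic_ext (interp_glue Ab Is) B"
      by (simp add: M_def basic_ext_interp_image basic_ext_interp_prod inj_image_mem_iff)
    then obtain f d where f: "f \<in> Ab" and d: "d \<in> basic_ext (Is f) B"
      and glue: "glue_map (Is f) f d = (a, [])"
      by (auto simp: basic_ext_interp_glue)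
    from wf[OF f] have "inj (ind (Is f))"
      by (simp add: wf_interp_def)
    with f d glue_map_eq_individual[OF this glue] show ?thesis
      by auto
  qed
  ultimately show ?thesis
    using that by blast
qed

lemma kb_entails_basic_single_assertion:
  fixes Ab :: "('a, 'r, 'c) assertion set" and T :: "('a, 'r) axiom set"
  assumes "consistent Ab T" and "kb_entails_basic Ab T B a"
  shows "\<exists>f\<in>Ab. a \<in> consts_of f \<and> kb_entails_basic {f} T B a"
proof (rule ccontr)
  assume no_support: "\<not> ?thesis"
  obtain J :: "('a, 'r, 'c, ('r, 'c) elem) interp" where J: "is_model J T Ab"
    using assms(1) unfolding consistent_def by blast
  have "\<exists>I :: ('a, 'r, 'c, ('r, 'c) elem) interp.
      is_model I T {f} \<and> (a \<in> consts_of f \<longrightarrow> ind I a \<notin> basic_ext I B)" if "f \<in> Ab" for f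
  proof (cases "a \<in> consts_of f")
    case True
    with no_support that show ?thesis
      unfolding kb_entails_basic_def by blast
  next
    case False
    with J that show ?thesis
      unfolding is_model_def by blast
  qed
  then obtain Is :: "('a, 'r, 'c) assertion \<Rightarrow> ('a, 'r, 'c, ('r, 'c) elem) interp"
    where Is: "\<And>f. f \<in> Ab \<Longrightarrow> is_model (Is f) T {f}"
      and refutes: "\<And>f. f \<in> Ab \<Longrightarrow> a \<in> consts_of f \<Longrightarrow> ind (Is f) a \<notin> basic_ext (Is f) B"
    by metis
  obtain M :: "('a, 'r, 'c, ('r, 'c) elem) interp" where "is_model M T Ab"
    and "\<And>a B. ind M a \<in> basic_ext M B \<Longrightarrow> \<exists>f\<in>Ab. a \<in> consts_of f \<and> ind (Is f) a \<in> basic_ext (Is f) B"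
    using models_of_assertions_combine[OF J Is] by blast
  with assms(2) refutes show False
    unfolding kb_entails_basic_def by blast
qed

lemma ind_canon [simp]: "ind (canon Ab T) c = (c, [])"
  by (simp add: canon_def)

lemma conc_canon_iff:
  "p \<in> conc (canon Ab T) A \<longleftrightarrow>
     (\<exists>a. p = (a, []) \<and> a \<in> const Ab \<and> kb_entails_basic Ab T (Atomic A) a)
   \<or> (p \<in> canon_dom Ab T \<and> snd p \<noteq> []
      \<and> tbox_entails T (CI (Ex (inv (last (snd p)))) (Pos (Atomic A))))"
  by (cases p) (auto simp: canon_def)

lemma rol_canon_iff:
  "(p, q) \<in> rol (canon Ab T) r \<longleftrightarrow>
     (\<exists>a b. p = (a, []) \<and> q = (b, []) \<and> RA r a b \<in> Ab)
   \<or> (\<exists>a ws R. p = (a, ws) \<and> q = (a, ws @ [R]) \<and> (a, ws @ [R]) \<in> canon_dom Ab T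
        \<and> tbox_entails T (RI R (RPos (P r))))
   \<or> (\<exists>a ws R. q = (a, ws) \<and> p = (a, ws @ [R]) \<and> (a, ws @ [R]) \<in> canon_dom Ab T
        \<and> tbox_entails T (RI R (RPos (Inv r))))"
  unfolding canon_def by (simp only: interp.simps Un_iff mem_Collect_eq prod.inject) blast

lemma mem_canon_dom_iff:
  "(a, ws) \<in> canon_dom Ab T \<longleftrightarrow> a \<in> const Ab
     \<and> (ws \<noteq> [] \<longrightarrow> kb_entails_basic Ab T (Ex (hd ws)) a
         \<and> (\<forall>b\<in>const Ab. \<not> kb_entails_role Ab T (hd ws) a b))
     \<and> successively (\<lambda>R S. tbox_entails T (CI (Ex (inv R)) (Pos (Ex S))) \<and> inv R \<noteq> S) ws"
  by (auto simp: canon_dom_def successively_conv_nth)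

lemma canon_dom_const: "(a, ws) \<in> canon_dom Ab T \<Longrightarrow> a \<in> const Ab"
  by (simp add: canon_dom_def)

lemma canon_dom_root: "a \<in> const Ab \<Longrightarrow> (a, []) \<in> canon_dom Ab T"
  by (simp add: canon_dom_def)

lemma canon_dom_butlast: "(a, ws @ [R]) \<in> canon_dom Ab T \<Longrightarrow> (a, ws) \<in> canon_dom Ab T"
  by (auto simp: mem_canon_dom_iff successively_append_iff)

lemma rol_canon_subset: "rol (canon Ab T) r \<subseteq> canon_dom Ab T \<times> canon_dom Ab T"
proof clarify
  fix p q assume "(p, q) \<in> rol (canon Ab T) r"
  then consider (abox) a b where "p = (a, [])" and "q = (b, [])" and "RA r a b \<in> Ab"
    | (tree) a ws R where "{p, q} = {(a, ws), (a, ws @ [R])}" and "(a, ws @ [R]) \<in> canon_dom Ab T"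
    unfolding rol_canon_iff by blast
  then show "p \<in> canon_dom Ab T \<and> q \<in> canon_dom Ab T"
  proof cases
    case abox
    then show ?thesis
      by (force simp: const_def intro: canon_dom_root)
  next
    case tree
    then show ?thesis
      using canon_dom_butlast[OF tree(2)] by (auto simp: doubleton_eq_iff)
  qed
qed

lemma conc_canon_subset: "conc (canon Ab T) A \<subseteq> canon_dom Ab T"
  by (auto simp: conc_canon_iff canon_dom_root)

lemma teval_canon: "teval (canon Ab T) h t = teval (canon Ab' T) h t"
  by (cases t) simp_all

lemma tvars_Var: "v \<in> tvars t \<Longrightarrow> t = Var v"
  by (cases t) simp_all

definition subtree :: "'c \<Rightarrow> 'r role \<Rightarrow> ('r, 'c) elem set" where
  "subtree a R = {(a, R # us) | us. True}"

lemma rol_canon_subtree: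
  assumes "(p, q) \<in> rol (canon Ab T) r" and "p \<in> subtree a R \<or> q \<in> subtree a R"
  shows "p \<in> insert (a, []) (subtree a R) \<and> q \<in> insert (a, []) (subtree a R)"
  using assms unfolding rol_canon_iff subtree_def by (auto simp: append_eq_Cons_conv Cons_eq_append_conv)

lemma rol_canon_transfer:
  assumes edge: "(p, q) \<in> rol (canon Ab T) r" and touch: "p \<in> subtree a R \<or> q \<in> subtree a R"
    and sub: "canon_dom Ab T \<inter> subtree a R \<subseteq> canon_dom Ab' T"
  shows "(p, q) \<in> rol (canon Ab' T) r"
proof -
  from edge consider
      (abox) b c where "p = (b, [])" and "q = (c, [])"
    | (down) b ws S where "p = (b, ws)" and "q = (b, ws @ [S])"
        and "(b, ws @ [S]) \<in> canon_dom Ab T" and "tbox_entails T (RI S (RPos (P r)))"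
    | (up) b ws S where "q = (b, ws)" and "p = (b, ws @ [S])"
        and "(b, ws @ [S]) \<in> canon_dom Ab T" and "tbox_entails T (RI S (RPos (Inv r)))"
    unfolding rol_canon_iff by blast
  then show ?thesis
  proof cases
    case abox
    with touch show ?thesis
      by (simp add: subtree_def)
  next
    case down
    with rol_canon_subtree[OF edge touch] have "(b, ws @ [S]) \<in> subtree a R"
      by auto
    with down sub show ?thesis
      unfolding rol_canon_iff by blast
  next
    case up
    with rol_canon_subtree[OF edge touch] have "(b, ws @ [S]) \<in> subtree a R"
      by auto
    with up sub show ?thesis
      unfolding rol_canon_iff by blast
  qed
qed

lemma atom_hom_canon_dom:
  assumes "atom_hom (canon Ab T) h \<gamma>" and "v \<in> avars \<gamma>"
  shows "h v \<in> canon_dom Ab T"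
proof (cases \<gamma>)
  case (CAt A t)
  with assms have "h v \<in> conc (canon Ab T) A"
    by (auto dest!: tvars_Var)
  then show ?thesis
    by (rule subsetD[OF conc_canon_subset])
next
  case (RAt r t u)
  with assms have edge: "(teval (canon Ab T) h t, teval (canon Ab T) h u) \<in> rol (canon Ab T) r"
    and "h v \<in> {teval (canon Ab T) h t, teval (canon Ab T) h u}"
    by (auto dest!: tvars_Var)
  with subsetD[OF rol_canon_subset edge] show ?thesis
    by auto
qed

lemma atom_hom_canon_subtree:
  assumes "atom_hom (canon Ab T) h \<gamma>" and "x \<in> avars \<gamma>" and "h x \<in> subtree a R"
    and "v \<in> avars \<gamma>"
  shows "h v \<in> insert (a, []) (subtree a R)"
proof (cases \<gamma>)
  case (CAt A t)
  with assms show ?thesis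
    by (auto dest!: tvars_Var)
next
  case (RAt r t u)
  with assms have edge: "(teval (canon Ab T) h t, teval (canon Ab T) h u) \<in> rol (canon Ab T) r"
    and "h x \<in> {teval (canon Ab T) h t, teval (canon Ab T) h u}"
    and "h v \<in> {teval (canon Ab T) h t, teval (canon Ab T) h u}"
    by (auto dest!: tvars_Var)
  with rol_canon_subtree[OF edge, of a R] assms(3) show ?thesis
    by auto
qed

lemma atom_hom_canon_transfer:
  assumes "atom_hom (canon Ab T) h \<gamma>" and "x \<in> avars \<gamma>" and "h x \<in> subtree a R"
    and sub: "canon_dom Ab T \<inter> subtree a R \<subseteq> canon_dom Ab' T"
  shows "atom_hom (canon Ab' T) h \<gamma>"
proof (cases \<gamma>)
  case (CAt A t)
  with assms(2) have "t = Var x"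
    by (simp add: tvars_Var)
  with CAt assms(1) have "h x \<in> conc (canon Ab T) A"
    by simp
  with assms(3) sub have "h x \<in> conc (canon Ab' T) A"
    unfolding conc_canon_iff subtree_def by auto
  with CAt \<open>t = Var x\<close> show ?thesis
    by simp
next
  case (RAt r t u)
  with assms(1) have edge: "(teval (canon Ab T) h t, teval (canon Ab T) h u) \<in> rol (canon Ab T) r"
    by simp
  from RAt assms(2) have "h x \<in> {teval (canon Ab T) h t, teval (canon Ab T) h u}"
    by (auto dest!: tvars_Var)
  with assms(3) rol_canon_transfer[OF edge _ sub] RAt show ?thesis
    by (auto simp: teval_canon[of Ab T h _ Ab'])
qed

text \<open>Besides the TBox, membership of a word \<open>R # us\<close> depends on the ABox only through
  \<open>\<exists>R(a)\<close> and the absence of entailed named \<open>R\<close>-successors of \<open>a\<close>, and the latter is inherited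
  by sub-ABoxes.\<close>
lemma canon_dom_subtree_single_assertion:
  assumes "f \<in> Ab" and "a \<in> consts_of f" and "kb_entails_basic {f} T (Ex R) a"
  shows "canon_dom Ab T \<inter> subtree a R \<subseteq> canon_dom {f} T"
proof
  fix w assume "w \<in> canon_dom Ab T \<inter> subtree a R"
  then obtain us where w: "w = (a, R # us)" and "(a, R # us) \<in> canon_dom Ab T"
    by (auto simp: subtree_def)
  moreover have "const {f} \<subseteq> const Ab"
    using assms(1) by (auto simp: const_def)
  moreover have "kb_entails_role {f} T R a b \<Longrightarrow> kb_entails_role Ab T R a b" for b
    using assms(1) by (auto simp: kb_entails_role_def is_model_def)
  ultimately show "w \<in> canon_dom {f} T"
    using assms(2,3) by (auto simp: mem_canon_dom_iff const_def)
qed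

lemma atom_hom_canon_single_assertion:
  assumes hom: "atom_hom (canon Ab T) h \<gamma>" and x: "x \<in> avars \<gamma>" "h x = (a, R # us)"
    and f: "f \<in> Ab" "a \<in> consts_of f" "kb_entails_basic {f} T (Ex R) a"
  shows "atom_hom (canon {f} T) h \<gamma>" and "v \<in> avars \<gamma> \<Longrightarrow> h v \<in> canon_dom {f} T"
proof -
  have x_sub: "h x \<in> subtree a R"
    using x(2) by (simp add: subtree_def)
  note sub = canon_dom_subtree_single_assertion[OF f]
  show "atom_hom (canon {f} T) h \<gamma>"
    using atom_hom_canon_transfer[OF hom x(1) x_sub sub] .
  assume "v \<in> avars \<gamma>"
  then have "h v \<in> canon_dom Ab T \<inter> insert (a, []) (subtree a R)"
    using atom_hom_canon_dom[OF hom] atom_hom_canon_subtree[OF hom x(1) x_sub] by blast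
  with sub f(2) canon_dom_root[of a "{f}" T] show "h v \<in> canon_dom {f} T"
    by (auto simp: const_def)
qed

definition match_pattern :: "('v \<Rightarrow> ('r, 'c) elem) \<Rightarrow> ('a, 'r, 'v, 'c) atom \<Rightarrow> 'v \<Rightarrow> 'c option option" where
  "match_pattern h \<gamma> v =
     (if v \<in> avars \<gamma> then Some (if snd (h v) = [] then Some (fst (h v)) else None) else None)"

lemma match_pattern_witness:
  assumes "atom_hom (canon {f} T) h \<gamma>" and dom: "\<And>v. v \<in> avars \<gamma> \<Longrightarrow> h v \<in> canon_dom {f} T"
  shows "admissible_mu f \<gamma> (match_pattern h \<gamma>) \<and> models_mu {f} T (match_pattern h \<gamma>) \<gamma>"
proof
  have "fst (h v) \<in> consts_of f" if "v \<in> avars \<gamma>" for v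
    using dom[OF that] by (cases "h v") (auto dest: canon_dom_const simp: const_def)
  then show "admissible_mu f \<gamma> (match_pattern h \<gamma>)"
    by (auto simp: admissible_mu_def match_pattern_def ran_def dom_def split: if_splits)
  show "models_mu {f} T (match_pattern h \<gamma>) \<gamma>"
    unfolding models_mu_def
  proof (intro exI conjI ballI allI impI)
    show "is_hom {\<gamma>} (canon {f} T) h"
      using assms(1) by (simp add: is_hom_def)
  next
    fix v c assume "match_pattern h \<gamma> v = Some (Some c)"
    then show "h v = (c, [])"
      by (cases "h v") (auto simp: match_pattern_def split: if_splits)
  next
    fix v assume "v \<in> avars \<gamma>" and "match_pattern h \<gamma> v = Some None"
    with dom show "anonymous {f} T (h v)"
      by (auto simp: match_pattern_def anonymous_def split: if_splits)
  qed
qed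

theorem lemma9:
  fixes T :: "('a, 'r) axiom set"
    and q :: "('a, 'r, 'v, 'c) atom set"
    and Ab :: "('a, 'r, 'c) assertion set"
    and x :: 'v
    and h :: "'v \<Rightarrow> ('r, 'c) elem"
  assumes "finite T" and "finite q" and "finite Ab"
    and "interaction_free T q"
    and "consistent Ab T"
    and "shared_var q x"
    and "is_hom q (canon Ab T) h"
  shows "h x \<in> (\<lambda>a. (a, [])) ` const Ab"
proof (rule ccontr)
  assume not_root: "h x \<notin> (\<lambda>a. (a, [])) ` const Ab"
  obtain \<alpha> \<beta> where \<alpha>: "\<alpha> \<in> q" "x \<in> avars \<alpha>" and \<beta>: "\<beta> \<in> q" "x \<in> avars \<beta>" and "\<alpha> \<noteq> \<beta>"
    using \<open>shared_var q x\<close> unfolding shared_var_def by blast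
  have hom: "atom_hom (canon Ab T) h \<gamma>" if "\<gamma> \<in> q" for \<gamma>
    using \<open>is_hom q (canon Ab T) h\<close> that unfolding is_hom_def by blast
  obtain a ws where hx: "h x = (a, ws)"
    by force
  moreover have "(a, ws) \<in> canon_dom Ab T"
    using atom_hom_canon_dom[OF hom[OF \<alpha>(1)] \<alpha>(2)] hx by simp
  ultimately obtain R us where ws: "ws = R # us" and "kb_entails_basic Ab T (Ex R) a"
    using not_root by (cases ws) (auto simp: mem_canon_dom_iff)
  then obtain f where f: "f \<in> Ab" "a \<in> consts_of f" "kb_entails_basic {f} T (Ex R) a"
    using kb_entails_basic_single_assertion[OF \<open>consistent Ab T\<close>] by blast
  have "admissible_mu f \<gamma> (match_pattern h \<gamma>) \<and> models_mu {f} T (match_pattern h \<gamma>) \<gamma>"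
    if "\<gamma> \<in> q" and "x \<in> avars \<gamma>" for \<gamma>
    using atom_hom_canon_single_assertion[OF hom[OF that(1)] that(2) hx[unfolded ws] f]
    by (rule match_pattern_witness)
  then have "(\<alpha>, match_pattern h \<alpha>) = (\<beta>, match_pattern h \<beta>)"
    using \<open>interaction_free T q\<close> \<alpha> \<beta> unfolding interaction_free_def by blast
  with \<open>\<alpha> \<noteq> \<beta>\<close> show False
    by simp
qed

end
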